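(* Let $I'(i,j)$, for $1\le i\le j\le n$, be the smallest index $k\in[i,j]$ such that $d_P(v_i,v_k)\ge |v_iv_j|+d_P(v_k,v_j)$. Then (1) $I'(i,j)\le I'(i,j+1)$ for all $1\le i\le j\le n-1$; and (2) $I'(i,j)\le I'(i+1,j)$ for all $1\le i\le j-1$, $j\le n$.
   Context: Let $v_1,\dots,v_n$ be points of a metric space with metric $|\cdot|$ (symmetric, nonnegative, $|v_iv_j|=0$ iff $i=j$, triangle inequality). For $i\le j$ let $d_P(v_i,v_j)=\sum_{k=i}^{j-1}|v_kv_{k+1}|$ and $d_P(v_j,v_i)=d_P(v_i,v_j)$. Note $I'(i,j)$ is well defined since $d_P(v_i,v_j)\ge|v_iv_j|$. *)

theory Defs
  imports Complex_Main
begin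

definition dP :: "(nat \<Rightarrow> 'a::metric_space) \<Rightarrow> nat \<Rightarrow> nat \<Rightarrow> real" where
  "dP v i j = (\<Sum>k \<in> {min i j..<max i j}. dist (v k) (v (Suc k)))"

definition Iprime :: "(nat \<Rightarrow> 'a::metric_space) \<Rightarrow> nat \<Rightarrow> nat \<Rightarrow> nat" where
  "Iprime v i j = (LEAST k. i \<le> k \<and> k \<le> j \<and> dP v i k \<ge> dist (v i) (v j) + dP v k j)"

end

theory Submission
  imports Defs
begin

text \<open>Both monotonicity statements follow from one observation: a witness k of the defining
  inequality of I'(i, j+1) with k \<le> j, resp. of I'(i+1, j), is already a witness for I'(i, j).
  Passing from v_{j+1} to v_j, resp. from v_{i+1} to v_i, changes the path lengths on both sides
  by the length of one edge, while the triangle inequality bounds the change of |v_i v_j| by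
  the same amount.\<close>

lemma dP_eq_sum: "i \<le> j \<Longrightarrow> dP v i j = (\<Sum>k\<in>{i..<j}. dist (v k) (v (Suc k)))"
  by (simp add: dP_def)

lemma dP_self [simp]: "dP v j j = 0"
  by (simp add: dP_def)

lemma dP_Suc_right: "i \<le> j \<Longrightarrow> dP v i (Suc j) = dP v i j + dist (v j) (v (Suc j))"
  by (simp add: dP_eq_sum)

lemma dP_Suc_left: "i < j \<Longrightarrow> dP v i j = dist (v i) (v (Suc i)) + dP v (Suc i) j"
  by (simp add: dP_eq_sum sum.atLeast_Suc_lessThan)

lemma dist_le_dP: "i \<le> j \<Longrightarrow> dist (v i) (v j) \<le> dP v i j"
proof (induction j)
  case 0
  then show ?case by simp
next
  case (Suc j)
  show ?case
  proof (cases "i = Suc j")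
    case False
    with Suc.prems have "i \<le> j" by simp
    have "dist (v i) (v (Suc j)) \<le> dist (v i) (v j) + dist (v j) (v (Suc j))"
      by (rule dist_triangle)
    also have "\<dots> \<le> dP v i (Suc j)"
      using Suc.IH \<open>i \<le> j\<close> by (simp add: dP_Suc_right)
    finally show ?thesis .
  qed simp
qed

lemma Iprime_bounds_and_inequality:
  assumes "i \<le> j"
  shows "i \<le> Iprime v i j \<and> Iprime v i j \<le> j \<and>
    dist (v i) (v j) + dP v (Iprime v i j) j \<le> dP v i (Iprime v i j)"
  unfolding Iprime_def
  by (rule LeastI[of _ j]) (use assms dist_le_dP[OF assms, of v] in simp)

lemma Iprime_le:
  assumes "i \<le> k" "k \<le> j" "dist (v i) (v j) + dP v k j \<le> dP v i k"
  shows "Iprime v i j \<le> k"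
  unfolding Iprime_def by (rule Least_le) (use assms in simp)

lemma Iprime_le_Iprime_Suc_right:
  assumes "i \<le> j"
  shows "Iprime v i j \<le> Iprime v i (Suc j)"
proof -
  define k where "k = Iprime v i (Suc j)"
  have k: "i \<le> k" "k \<le> Suc j" "dist (v i) (v (Suc j)) + dP v k (Suc j) \<le> dP v i k"
    using Iprime_bounds_and_inequality[of i "Suc j" v] assms unfolding k_def by auto
  show ?thesis
  proof (cases "k = Suc j")
    case True
    then show ?thesis
      using Iprime_bounds_and_inequality[OF assms, of v] unfolding k_def by simp
  next
    case False
    with k have "k \<le> j" by simp
    have "dist (v i) (v j) \<le> dist (v i) (v (Suc j)) + dist (v j) (v (Suc j))"
      by (metis dist_commute dist_triangle)
    with k(3) have "dist (v i) (v j) + dP v k j \<le> dP v i k"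
      using dP_Suc_right[OF \<open>k \<le> j\<close>, of v] by simp
    then have "Iprime v i j \<le> k"
      by (rule Iprime_le[OF k(1) \<open>k \<le> j\<close>])
    then show ?thesis
      unfolding k_def .
  qed
qed

lemma Iprime_le_Iprime_Suc_left:
  assumes "i < j"
  shows "Iprime v i j \<le> Iprime v (Suc i) j"
proof -
  define k where "k = Iprime v (Suc i) j"
  have k: "Suc i \<le> k" "k \<le> j" "dist (v (Suc i)) (v j) + dP v k j \<le> dP v (Suc i) k"
    using Iprime_bounds_and_inequality[of "Suc i" j v] assms unfolding k_def by auto
  have "dist (v i) (v j) \<le> dist (v i) (v (Suc i)) + dist (v (Suc i)) (v j)"
    by (rule dist_triangle)
  with k(3) have "dist (v i) (v j) + dP v k j \<le> dP v i k"
    using dP_Suc_left[of i k v] k(1) by simp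
  then have "Iprime v i j \<le> k"
    using k(1) by (intro Iprime_le[OF _ k(2)]) simp_all
  then show ?thesis
    unfolding k_def .
qed

theorem lemma3:
  fixes v :: "nat \<Rightarrow> 'a::metric_space" and n :: nat
  assumes distinct: "inj_on v {1..n}"
  shows "(\<forall>i j. 1 \<le> i \<and> i \<le> j \<and> j \<le> n - 1 \<longrightarrow> Iprime v i j \<le> Iprime v i (j + 1))
       \<and> (\<forall>i j. 1 \<le> i \<and> i \<le> j - 1 \<and> j \<le> n \<longrightarrow> Iprime v i j \<le> Iprime v (i + 1) j)"
proof (intro conjI allI impI)
  fix i j :: nat
  assume "1 \<le> i \<and> i \<le> j \<and> j \<le> n - 1"
  then show "Iprime v i j \<le> Iprime v i (j + 1)"
    using Iprime_le_Iprime_Suc_right[of i j v] by simp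
next
  fix i j :: nat
  assume "1 \<le> i \<and> i \<le> j - 1 \<and> j \<le> n"
  then have "i < j" by linarith
  then show "Iprime v i j \<le> Iprime v (i + 1) j"
    using Iprime_le_Iprime_Suc_left[of i j v] by simp
qed

end
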